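(* Let $(X,m)$ be a $\sigma$-finite measure space, let $1\le p<\infty$, let $\eta>1$, and let $\{T_t:t>0\}$ be a one-parameter family of (not necessarily linear) operators on $L^p(X,m)$. Let $f\in L^p(X,m)$ with $(x,t)\mapsto T_tf(x)$ measurable. Set $$F_\lambda=\Big\{(x,t)\in X\times(0,1/2):\frac{|T_tf(x)|}{\log^{\frac{1-\eta}{p}}(1/t)}>\lambda\Big\}.$$ (i) If $T^*f:=\sup_{t>0}|T_tf|\in L^p(X,m)$, then $\sup_{\lambda>0}\lambda^p(m\times v_\eta)(F_\lambda)\le\frac{1}{\eta-1}\|T^*f\|_{L^p(X,m)}^p$. In particular, if $p>1$ and $\|T^*h\|_{L^p}\le C_p\|h\|_{L^p}$ for all $h\in L^p(X,m)$, then $\sup_{\lambda>0}\lambda^p(m\times v_\eta)(F_\lambda)\le\frac{C_p^p}{\eta-1}\|f\|_{L^p(X,m)}^p$. (ii) If $g(x)=\lim_{t\to0+}T_tf(x)$ exists and is finite for $m$-a.e. $x\in X$, then $\frac{1}{\eta-1}\|g\|_{L^p(X,m)}^p\le\liminf_{\lambda\to\infty}\lambda^p(m\times v_\eta)(F_\lambda)$.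
   Context: For $\eta>1$, $v_\eta$ is the measure on $(0,1/2)$ given by $v_\eta(A)=\int_A t^{-1}\log^{-\eta}(1/t)\,dt$ for Lebesgue measurable $A\subset(0,1/2)$. *)

theory Defs
  imports "HOL-Analysis.Analysis"
begin

definition v_eta :: "real \<Rightarrow> real measure" where
  "v_eta \<eta> = density (restrict_space lborel {0<..<1/2})
      (\<lambda>t. ennreal (inverse t * ln (1 / t) powr (- \<eta>)))"

definition enn_powr :: "ennreal \<Rightarrow> real \<Rightarrow> ennreal" where
  "enn_powr x p = (if x = \<infinity> then \<infinity> else ennreal (enn2real x powr p))"

definition memLp :: "'a measure \<Rightarrow> real \<Rightarrow> ('a \<Rightarrow> real) \<Rightarrow> bool" where
  "memLp M p h \<longleftrightarrow> h \<in> borel_measurable M \<and> (\<integral>\<^sup>+ x. ennreal (\<bar>h x\<bar> powr p) \<partial>M) < \<infinity>"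

definition Lp_pow :: "'a measure \<Rightarrow> real \<Rightarrow> ('a \<Rightarrow> real) \<Rightarrow> ennreal" where
  "Lp_pow M p h = (\<integral>\<^sup>+ x. ennreal (\<bar>h x\<bar> powr p) \<partial>M)"

definition Tstar :: "(real \<Rightarrow> ('a \<Rightarrow> real) \<Rightarrow> 'a \<Rightarrow> real) \<Rightarrow> ('a \<Rightarrow> real) \<Rightarrow> 'a \<Rightarrow> ennreal" where
  "Tstar T h x = (SUP t\<in>{0<..}. ennreal \<bar>T t h x\<bar>)"

definition F_set :: "'a measure \<Rightarrow> real \<Rightarrow> real \<Rightarrow> (real \<Rightarrow> 'a \<Rightarrow> real) \<Rightarrow> real \<Rightarrow> ('a \<times> real) set" where
  "F_set M p \<eta> Tf c = {(x, t). x \<in> space M \<and> t \<in> {0<..<1/2} \<and>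
      \<bar>Tf t x\<bar> / (ln (1 / t) powr ((1 - \<eta>) / p)) > c}"

end

theory Submission
  imports Defs "HOL-Real_Asymp.Real_Asymp"
begin

text \<open>
  Write \<open>\<phi> t = ln (1/t) powr (1-\<eta>)\<close>. Since \<open>v\<^sub>\<eta> (0,s) = \<phi> s / (\<eta>-1)\<close> and \<open>\<phi>\<close> is
  increasing, the set \<open>{t < \<delta>. \<lambda> \<phi>(t) powr (1/p) < A}\<close> is an interval whose \<open>v\<^sub>\<eta>\<close>-measure,
  multiplied by \<open>\<lambda>\<^sup>p\<close>, is \<open>min A\<^sup>p (\<lambda>\<^sup>p \<phi> \<delta>) / (\<eta>-1)\<close>.
  The \<open>x\<close>-section of \<open>F\<^sub>\<lambda>\<close> lies in such a set with \<open>A = T\<^sup>*f(x)\<close> and \<open>\<delta> = 1/2\<close>, so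
  \<open>\<lambda>\<^sup>p v\<^sub>\<eta>(section) \<le> T\<^sup>*f(x)\<^sup>p / (\<eta>-1)\<close>, and Tonelli gives (i).
  If \<open>T\<^sub>t f(x) \<rightarrow> g(x)\<close> and \<open>A < |g(x)|\<close>, the section contains such a set for some small \<open>\<delta>\<close>,
  and its scaled measure is \<open>A\<^sup>p / (\<eta>-1)\<close> once \<open>\<lambda>\<^sup>p \<phi> \<delta> \<ge> A\<^sup>p\<close>; Fatou's lemma along
  \<open>\<lambda> \<rightarrow> \<infinity>\<close> gives (ii).
\<close>

lemma nn_integral_Liminf_at_top_le:
  fixes u :: "real \<Rightarrow> 'a \<Rightarrow> ennreal"
  assumes u: "\<And>c. u c \<in> borel_measurable M"
  shows "(\<integral>\<^sup>+ x. Liminf at_top (\<lambda>c. u c x) \<partial>M) \<le> Liminf at_top (\<lambda>c. \<integral>\<^sup>+ x. u c x \<partial>M)"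
proof (rule ccontr)
  assume "\<not> ?thesis"
  then obtain y where y: "y < (\<integral>\<^sup>+ x. Liminf at_top (\<lambda>c. u c x) \<partial>M)"
    and not_eventually: "\<not> eventually (\<lambda>c. y < (\<integral>\<^sup>+ x. u c x \<partial>M)) at_top"
    unfolding le_Liminf_iff by auto
  then have "\<forall>n::nat. \<exists>c \<ge> real n. (\<integral>\<^sup>+ x. u c x \<partial>M) \<le> y"
    unfolding eventually_at_top_linorder by (auto simp: not_less)
  then obtain cs where cs: "\<And>n. cs n \<ge> real n" "\<And>n. (\<integral>\<^sup>+ x. u (cs n) x \<partial>M) \<le> y"
    by metis
  have cs_lim: "filterlim cs at_top sequentially"
    using cs(1) by (intro filterlim_at_top_mono[OF filterlim_real_sequentially]) auto
  have "Liminf at_top (\<lambda>c. u c x) \<le> liminf (\<lambda>n. u (cs n) x)" for x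
    unfolding le_Liminf_iff
    using eventually_compose_filterlim[OF _ cs_lim] less_LiminfD by blast
  then have "(\<integral>\<^sup>+ x. Liminf at_top (\<lambda>c. u c x) \<partial>M) \<le> (\<integral>\<^sup>+ x. liminf (\<lambda>n. u (cs n) x) \<partial>M)"
    by (intro nn_integral_mono)
  also have "\<dots> \<le> liminf (\<lambda>n. \<integral>\<^sup>+ x. u (cs n) x \<partial>M)"
    using u by (rule nn_integral_liminf)
  also have "\<dots> \<le> y"
    using cs(2) by (intro Liminf_le) auto
  finally show False using y by simp
qed

lemma AE_tendsto_at_right_0_measurable_version:
  fixes u :: "real \<Rightarrow> 'a \<Rightarrow> real"
  assumes "\<And>t. t > 0 \<Longrightarrow> u t \<in> borel_measurable M"
    and "AE x in M. ((\<lambda>t. u t x) \<longlongrightarrow> g x) (at_right 0)"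
  obtains g' where "g' \<in> borel_measurable M" "AE x in M. g' x = g x"
proof
  define g' where "g' x = lim (\<lambda>n. u (1 / Suc n) x)" for x
  show "g' \<in> borel_measurable M"
    unfolding g'_def using assms(1) by measurable
  have seq: "filterlim (\<lambda>n. 1 / real (Suc n)) (at_right 0) sequentially"
    by (intro tendsto_imp_filterlim_at_right) real_asymp+
  show "AE x in M. g' x = g x"
    using assms(2)
  proof eventually_elim
    case (elim x)
    have "(\<lambda>n. u (1 / Suc n) x) \<longlonglongrightarrow> g x"
      using filterlim_compose[OF elim seq] by (simp add: o_def)
    then show ?case unfolding g'_def by (rule limI)
  qed
qed

lemma DERIV_ln_inverse_powr:
  fixes \<eta> t :: real
  assumes "\<eta> \<noteq> 1" "0 < t" "t < 1"
  shows "DERIV (\<lambda>t. ln (1/t) powr (1-\<eta>) / (\<eta>-1)) t :> inverse t * ln (1/t) powr (-\<eta>)"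
proof -
  have "ln (1/t) > 0" using assms by (simp add: ln_div)
  then have "DERIV (\<lambda>t. ln (1/t) powr (1-\<eta>) / (\<eta>-1)) t
      :> (1-\<eta>) * ln (1/t) powr (1-\<eta>-1) * (- inverse t) / (\<eta>-1)"
    using assms by (auto intro!: derivative_eq_intros simp: inverse_eq_divide)
  also have "(1-\<eta>) * ln (1/t) powr (1-\<eta>-1) * (- inverse t) / (\<eta>-1) = inverse t * ln (1/t) powr (-\<eta>)"
    using assms by (simp add: field_simps)
  finally show ?thesis .
qed

lemma nn_integral_inverse_mult_ln_powr:
  fixes \<eta> s :: real
  assumes eta: "\<eta> > 1" and s: "0 < s" "s < 1"
  shows "(\<integral>\<^sup>+ t. ennreal (indicator {0<..<s} t * (inverse t * ln (1/t) powr (-\<eta>))) \<partial>lborel)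
           = ennreal (ln (1/s) powr (1-\<eta>) / (\<eta>-1))"
proof -
  define f where "f t = inverse t * ln (1/t) powr (-\<eta>)" for t :: real
  define F where "F t = ln (1/t) powr (1-\<eta>) / (\<eta>-1)" for t :: real
  have ln_pos: "ln (1/t) > 0" if "0 < t" "t < 1" for t :: real
    using that by (simp add: ln_div)
  have F_deriv: "DERIV F t :> f t" if "0 < t" "t < s" for t
    unfolding F_def f_def using that s eta by (intro DERIV_ln_inverse_powr) auto
  have f_cont: "isCont f t" if "0 < t" "t < s" for t
    using that s ln_pos[of t] unfolding f_def by (auto intro!: continuous_intros)
  have F_at_0: "(F \<longlongrightarrow> 0) (at_right 0)"
  proof -
    have "filterlim (\<lambda>t::real. ln (1/t)) at_top (at_right 0)" by real_asymp
    then have "((\<lambda>t. ln (1/t) powr (1-\<eta>)) \<longlongrightarrow> 0) (at_right 0)"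
      using eta by (intro tendsto_neg_powr) auto
    then show ?thesis unfolding F_def using tendsto_divide_zero by blast
  qed
  have F_at_s: "(F \<longlongrightarrow> F s) (at_left s)"
  proof -
    have "isCont F s" using s eta ln_pos[of s] unfolding F_def by (auto intro!: continuous_intros)
    then show ?thesis by (simp add: isCont_def filterlim_at_split)
  qed
  have f_nonneg: "0 \<le> f t" if "0 < t" for t unfolding f_def using that by simp
  have "set_integrable lborel (einterval (ereal 0) (ereal s)) f \<and> (LBINT t=ereal 0..ereal s. f t) = F s - 0"
    using s F_deriv f_cont f_nonneg F_at_0 F_at_s
    by (intro conjI interval_integral_FTC_nonneg[of "ereal 0" "ereal s" F f 0 "F s"])
       (auto simp: einterval_iff ereal_tendsto_simps1)
  then have FTC: "set_integrable lborel (einterval 0 s) f \<and> (LBINT t=ereal 0..ereal s. f t) = F s"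
    by (simp add: zero_ereal_def)
  have Ioo: "einterval 0 (ereal s) = {0<..<s}" by (metis einterval_eq_Icc zero_ereal_def)
  have "(\<integral>\<^sup>+ t. ennreal (indicator {0<..<s} t * f t) \<partial>lborel) = ennreal (LBINT t=ereal 0..ereal s. f t)"
    using FTC s unfolding set_integrable_def
    by (subst nn_integral_eq_integral)
       (auto simp: Ioo zero_ereal_def[symmetric] interval_lebesgue_integral_def
          set_lebesgue_integral_def f_nonneg split: split_indicator)
  with FTC show ?thesis by (simp add: f_def F_def)
qed

lemma emeasure_v_eta_Ioo:
  fixes \<eta> s :: real
  assumes "\<eta> > 1" "0 < s" "s \<le> 1/2"
  shows "emeasure (v_eta \<eta>) {0<..<s} = ennreal (ln (1/s) powr (1-\<eta>) / (\<eta>-1))"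
proof -
  have "{0<..<s} \<in> sets (restrict_space lborel {0<..<(1/2::real)})"
    using assms by (auto simp: sets_restrict_space_iff)
  then have "emeasure (v_eta \<eta>) {0<..<s}
      = (\<integral>\<^sup>+ t. ennreal (inverse t * ln (1/t) powr (-\<eta>)) * indicator {0<..<s} t
           \<partial>restrict_space lborel {0<..<1/2})"
    unfolding v_eta_def by (intro emeasure_density) (auto intro!: measurable_restrict_space1)
  also have "\<dots> = (\<integral>\<^sup>+ t. ennreal (indicator {0<..<s} t * (inverse t * ln (1/t) powr (-\<eta>))) \<partial>lborel)"
    using assms by (subst nn_integral_restrict_space) (auto intro!: nn_integral_cong split: split_indicator)
  finally show ?thesis
    using assms nn_integral_inverse_mult_ln_powr[of \<eta> s] by simp
qed

lemma finite_measure_v_eta: "\<eta> > 1 \<Longrightarrow> finite_measure (v_eta \<eta>)"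
  using emeasure_v_eta_Ioo[of \<eta> "1/2"] by (intro finite_measureI) (simp add: v_eta_def)

lemma ln_inverse_powr_less_iff:
  fixes \<eta> b t :: real
  assumes "\<eta> > 1" "0 < t" "t < 1" "b > 0"
  shows "ln (1/t) powr (1-\<eta>) < b \<longleftrightarrow> t < exp (-(b powr (-1/(\<eta>-1))))"
proof -
  have ln_pos: "ln (1/t) > 0" using assms by (simp add: ln_div)
  have "ln (1/t) powr (1-\<eta>) < b \<longleftrightarrow> b powr (-1/(\<eta>-1)) < (ln (1/t) powr (1-\<eta>)) powr (-1/(\<eta>-1))"
    using assms ln_pos by (smt (verit) powr_less_mono2_neg divide_neg_pos powr_gt_zero)
  also have "(ln (1/t) powr (1-\<eta>)) powr (-1/(\<eta>-1)) = ln (1/t)"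
  proof -
    have "(1-\<eta>) * (-1/(\<eta>-1)) = 1" using assms by (simp add: field_simps)
    then show ?thesis using ln_pos by (simp add: powr_powr)
  qed
  also have "b powr (-1/(\<eta>-1)) < ln (1/t) \<longleftrightarrow> t < exp (-(b powr (-1/(\<eta>-1))))"
    using assms by (smt (verit) exp_less_cancel_iff exp_ln ln_div ln_one)
  finally show ?thesis .
qed

lemma ln_inverse_powr_sublevel_eq_Ioo:
  fixes \<eta> b \<delta> :: real
  assumes "\<eta> > 1" "b > 0" "\<delta> \<le> 1"
  shows "{t \<in> {0<..<\<delta>}. ln (1/t) powr (1-\<eta>) < b} = {0<..<min (exp (-(b powr (-1/(\<eta>-1))))) \<delta>}"
  using assms ln_inverse_powr_less_iff[OF assms(1) _ _ assms(2)] by auto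

lemma emeasure_v_eta_sublevel:
  fixes \<eta> b \<delta> :: real
  assumes eta: "\<eta> > 1" and b: "b > 0" and \<delta>: "0 < \<delta>" "\<delta> \<le> 1/2"
  shows "emeasure (v_eta \<eta>) {t \<in> {0<..<\<delta>}. ln (1/t) powr (1-\<eta>) < b}
           = ennreal (min b (ln (1/\<delta>) powr (1-\<eta>)) / (\<eta>-1))"
proof -
  define s where "s = exp (-(b powr (-1/(\<eta>-1))))"
  have s: "0 < s" "s < 1" using b unfolding s_def by auto
  have ln_s: "ln (1/s) powr (1-\<eta>) = b"
  proof -
    have "-(1/(\<eta>-1)) * (1-\<eta>) = 1" using eta by (simp add: field_simps)
    then show ?thesis using eta b by (simp add: s_def ln_div powr_powr)
  qed
  have less_iff: "\<delta> < s \<longleftrightarrow> ln (1/\<delta>) powr (1-\<eta>) < b"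
    using ln_inverse_powr_less_iff[OF eta \<delta>(1) _ b] \<delta> unfolding s_def by simp
  have "emeasure (v_eta \<eta>) {t \<in> {0<..<\<delta>}. ln (1/t) powr (1-\<eta>) < b} = emeasure (v_eta \<eta>) {0<..<min s \<delta>}"
    using ln_inverse_powr_sublevel_eq_Ioo[OF eta b] \<delta> unfolding s_def by simp
  also have "\<dots> = ennreal (ln (1/min s \<delta>) powr (1-\<eta>) / (\<eta>-1))"
    using emeasure_v_eta_Ioo[OF eta] s \<delta> by simp
  also have "ln (1/min s \<delta>) powr (1-\<eta>) = min b (ln (1/\<delta>) powr (1-\<eta>))"
    using less_iff ln_s by (auto simp: min_def)
  finally show ?thesis .
qed

lemma less_divide_ln_inverse_powr_iff:
  fixes \<eta> p A c t :: real
  assumes "p > 0" "A > 0" "c > 0" "0 < t" "t < 1"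
  shows "c < A / ln (1/t) powr ((1-\<eta>)/p) \<longleftrightarrow> ln (1/t) powr (1-\<eta>) < (A/c) powr p"
proof -
  define L where "L = ln (1/t) powr ((1-\<eta>)/p)"
  have L: "L > 0" unfolding L_def using assms by (simp add: ln_div)
  have "c < A / L \<longleftrightarrow> L < A / c" using L assms by (simp add: field_simps)
  also have "\<dots> \<longleftrightarrow> L powr p < (A/c) powr p"
    using L assms by (meson powr_less_mono2 powr_mono2 divide_pos_pos less_le not_le)
  also have "L powr p = ln (1/t) powr (1-\<eta>)" unfolding L_def using assms by (simp add: powr_powr)
  finally show ?thesis unfolding L_def .
qed

lemma v_eta_level_set:
  fixes \<eta> p A c \<delta> :: real
  assumes "\<eta> > 1" "p > 0" "A > 0" "c > 0" "0 < \<delta>" "\<delta> \<le> 1/2"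
  shows "{t \<in> {0<..<\<delta>}. c < A / ln (1/t) powr ((1-\<eta>)/p)} \<in> sets (v_eta \<eta>)"
    and "ennreal (c powr p) * emeasure (v_eta \<eta>) {t \<in> {0<..<\<delta>}. c < A / ln (1/t) powr ((1-\<eta>)/p)}
           = ennreal (min (A powr p) (c powr p * ln (1/\<delta>) powr (1-\<eta>)) / (\<eta>-1))"
proof -
  have set_eq: "{t \<in> {0<..<\<delta>}. c < A / ln (1/t) powr ((1-\<eta>)/p)}
      = {t \<in> {0<..<\<delta>}. ln (1/t) powr (1-\<eta>) < (A/c) powr p}"
    using less_divide_ln_inverse_powr_iff[of p A c _ \<eta>] assms by auto
  show "{t \<in> {0<..<\<delta>}. c < A / ln (1/t) powr ((1-\<eta>)/p)} \<in> sets (v_eta \<eta>)"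
  proof -
    have "{t \<in> {0<..<\<delta>}. ln (1/t) powr (1-\<eta>) < (A/c) powr p} \<subseteq> {0<..<1/2}"
      using assms by auto
    then show ?thesis
      unfolding set_eq using assms by (simp add: v_eta_def sets_restrict_space_iff)
  qed
  have "c powr p * (min ((A/c) powr p) (ln (1/\<delta>) powr (1-\<eta>)) / (\<eta>-1))
      = min (A powr p) (c powr p * ln (1/\<delta>) powr (1-\<eta>)) / (\<eta>-1)"
    using assms by (simp add: min_mult_distrib_left powr_divide)
  moreover have "emeasure (v_eta \<eta>) {t \<in> {0<..<\<delta>}. ln (1/t) powr (1-\<eta>) < (A/c) powr p}
      = ennreal (min ((A/c) powr p) (ln (1/\<delta>) powr (1-\<eta>)) / (\<eta>-1))"
    using assms by (intro emeasure_v_eta_sublevel) auto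
  ultimately show "ennreal (c powr p) * emeasure (v_eta \<eta>) {t \<in> {0<..<\<delta>}. c < A / ln (1/t) powr ((1-\<eta>)/p)}
      = ennreal (min (A powr p) (c powr p * ln (1/\<delta>) powr (1-\<eta>)) / (\<eta>-1))"
    unfolding set_eq using assms by (simp add: ennreal_mult[symmetric])
qed

lemma F_set_in_sets:
  assumes "(\<lambda>(x, t). Tf t x) \<in> borel_measurable (M \<Otimes>\<^sub>M restrict_space lborel {0<..})"
  shows "F_set M p \<eta> Tf c \<in> sets (M \<Otimes>\<^sub>M v_eta \<eta>)"
proof -
  define N where "N = restrict_space lborel {0<..<(1/2::real)}"
  have "(\<lambda>t. t) \<in> measurable N (restrict_space lborel {0<..})"
    unfolding N_def by (rule measurable_restrict_space3) auto
  then have "(\<lambda>z. (fst z, snd z)) \<in> measurable (M \<Otimes>\<^sub>M N) (M \<Otimes>\<^sub>M restrict_space lborel {0<..})"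
    by measurable
  from measurable_compose[OF this assms]
  have "(\<lambda>(x, t). Tf t x) \<in> borel_measurable (M \<Otimes>\<^sub>M N)" by simp
  moreover have "(\<lambda>t::real. ln (1/t) powr ((1-\<eta>)/p)) \<in> borel_measurable N"
    unfolding N_def by (intro measurable_restrict_space1) measurable
  ultimately have "{z \<in> space (M \<Otimes>\<^sub>M N). c < \<bar>(case z of (x, t) \<Rightarrow> Tf t x)\<bar> / ln (1/snd z) powr ((1-\<eta>)/p)}
      \<in> sets (M \<Otimes>\<^sub>M N)"
    by measurable
  also have "{z \<in> space (M \<Otimes>\<^sub>M N). c < \<bar>(case z of (x, t) \<Rightarrow> Tf t x)\<bar> / ln (1/snd z) powr ((1-\<eta>)/p)}
      = F_set M p \<eta> Tf c"
    unfolding F_set_def N_def by (auto simp: space_pair_measure)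
  also have "sets (M \<Otimes>\<^sub>M N) = sets (M \<Otimes>\<^sub>M v_eta \<eta>)"
    unfolding N_def v_eta_def by (intro sets_pair_measure_cong) simp_all
  finally show ?thesis .
qed

lemma vimage_Pair_F_set:
  "Pair x -` F_set M p \<eta> Tf c
     = (if x \<in> space M then {t \<in> {0<..<1/2}. c < \<bar>Tf t x\<bar> / ln (1/t) powr ((1-\<eta>)/p)} else {})"
  unfolding F_set_def by auto

lemma emeasure_F_set:
  assumes "\<eta> > 1"
    and "(\<lambda>(x, t). Tf t x) \<in> borel_measurable (M \<Otimes>\<^sub>M restrict_space lborel {0<..})"
  shows "emeasure (M \<Otimes>\<^sub>M v_eta \<eta>) (F_set M p \<eta> Tf c)
           = (\<integral>\<^sup>+ x. emeasure (v_eta \<eta>) (Pair x -` F_set M p \<eta> Tf c) \<partial>M)"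
    and "(\<lambda>x. emeasure (v_eta \<eta>) (Pair x -` F_set M p \<eta> Tf c)) \<in> borel_measurable M"
proof -
  interpret finite_measure "v_eta \<eta>" using assms(1) by (rule finite_measure_v_eta)
  show "emeasure (M \<Otimes>\<^sub>M v_eta \<eta>) (F_set M p \<eta> Tf c)
      = (\<integral>\<^sup>+ x. emeasure (v_eta \<eta>) (Pair x -` F_set M p \<eta> Tf c) \<partial>M)"
    using F_set_in_sets[OF assms(2)] by (rule emeasure_pair_measure_alt)
  show "(\<lambda>x. emeasure (v_eta \<eta>) (Pair x -` F_set M p \<eta> Tf c)) \<in> borel_measurable M"
    using F_set_in_sets[OF assms(2)] by (rule measurable_emeasure_Pair)
qed

lemma scaled_emeasure_section_F_set_le:
  fixes A :: real
  assumes eta: "\<eta> > 1" and p: "p > 0" and c: "c > 0"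
    and bound: "\<And>t. 0 < t \<Longrightarrow> t < 1/2 \<Longrightarrow> \<bar>Tf t x\<bar> \<le> A"
  shows "ennreal (c powr p) * emeasure (v_eta \<eta>) (Pair x -` F_set M p \<eta> Tf c) \<le> ennreal (A powr p / (\<eta>-1))"
proof (cases "x \<in> space M \<and> A > 0")
  case False
  have "A \<ge> 0" using bound[of "1/4"] by simp
  with False have "Pair x -` F_set M p \<eta> Tf c = {}"
    using bound c by (force simp: vimage_Pair_F_set)
  then show ?thesis by simp
next
  case True
  define E where "E = {t \<in> {0<..<1/2}. c < A / ln (1/t) powr ((1-\<eta>)/p)}"
  have "Pair x -` F_set M p \<eta> Tf c \<subseteq> E"
  proof
    fix t assume "t \<in> Pair x -` F_set M p \<eta> Tf c"
    then have t: "0 < t" "t < 1/2" "c < \<bar>Tf t x\<bar> / ln (1/t) powr ((1-\<eta>)/p)"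
      using True by (auto simp: vimage_Pair_F_set)
    have "\<bar>Tf t x\<bar> / ln (1/t) powr ((1-\<eta>)/p) \<le> A / ln (1/t) powr ((1-\<eta>)/p)"
      using bound[OF t(1,2)] by (intro divide_right_mono) auto
    then show "t \<in> E" using t unfolding E_def by auto
  qed
  then have "ennreal (c powr p) * emeasure (v_eta \<eta>) (Pair x -` F_set M p \<eta> Tf c)
      \<le> ennreal (c powr p) * emeasure (v_eta \<eta>) E"
    using v_eta_level_set(1)[OF eta p _ c, of A "1/2"] True
    by (intro mult_left_mono emeasure_mono) (auto simp: E_def)
  also have "\<dots> = ennreal (min (A powr p) (c powr p * ln (1/(1/2)) powr (1-\<eta>)) / (\<eta>-1))"
    unfolding E_def using True by (intro v_eta_level_set(2)[OF eta p _ c]) auto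
  also have "\<dots> \<le> ennreal (A powr p / (\<eta>-1))"
    using eta by (intro ennreal_leI divide_right_mono) auto
  finally show ?thesis .
qed

lemma eventually_scaled_emeasure_section_F_set_ge:
  fixes A :: real
  assumes eta: "\<eta> > 1" and p: "p > 0" and A: "A > 0" and x: "x \<in> space M"
    and near_0: "eventually (\<lambda>t. A < \<bar>Tf t x\<bar>) (at_right 0)"
    and sets: "\<And>c. Pair x -` F_set M p \<eta> Tf c \<in> sets (v_eta \<eta>)"
  shows "eventually (\<lambda>c. ennreal (A powr p / (\<eta>-1))
           \<le> ennreal (c powr p) * emeasure (v_eta \<eta>) (Pair x -` F_set M p \<eta> Tf c)) at_top"
proof -
  obtain d0 where d0: "d0 > 0" and near0: "\<And>t. 0 < t \<Longrightarrow> t < d0 \<Longrightarrow> A < \<bar>Tf t x\<bar>"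
    using near_0 unfolding eventually_at_right_field by auto
  define d where "d = min d0 (1/2)"
  have d: "0 < d" "d \<le> 1/2" and near: "\<And>t. 0 < t \<Longrightarrow> t < d \<Longrightarrow> A < \<bar>Tf t x\<bar>"
    using d0 near0 unfolding d_def by auto
  have ln_d: "ln (1/d) powr (1-\<eta>) > 0" using d by (simp add: ln_div)
  have "filterlim (\<lambda>c::real. c powr p * ln (1/d) powr (1-\<eta>)) at_top at_top"
    by (rule filterlim_at_top_mult_tendsto_pos[OF tendsto_const ln_d real_powr_at_top[OF p]])
  then have "eventually (\<lambda>c. A powr p \<le> c powr p * ln (1/d) powr (1-\<eta>)) at_top"
    by (simp add: filterlim_at_top)
  with eventually_gt_at_top[of 0] show ?thesis
  proof eventually_elim
    case (elim c)
    define E where "E = {t \<in> {0<..<d}. c < A / ln (1/t) powr ((1-\<eta>)/p)}"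
    have "E \<subseteq> Pair x -` F_set M p \<eta> Tf c"
    proof
      fix t assume "t \<in> E"
      then have t: "0 < t" "t < d" "c < A / ln (1/t) powr ((1-\<eta>)/p)" unfolding E_def by auto
      have "A / ln (1/t) powr ((1-\<eta>)/p) \<le> \<bar>Tf t x\<bar> / ln (1/t) powr ((1-\<eta>)/p)"
        using near[OF t(1,2)] by (intro divide_right_mono) auto
      then show "t \<in> Pair x -` F_set M p \<eta> Tf c" using t d x by (auto simp: vimage_Pair_F_set)
    qed
    have "ennreal (A powr p / (\<eta>-1)) = ennreal (c powr p) * emeasure (v_eta \<eta>) E"
      unfolding E_def using v_eta_level_set(2)[OF eta p A elim(1) d] elim(2) by (simp add: min_def)
    also have "\<dots> \<le> ennreal (c powr p) * emeasure (v_eta \<eta>) (Pair x -` F_set M p \<eta> Tf c)"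
      using \<open>E \<subseteq> _\<close> sets by (intro mult_left_mono emeasure_mono) auto
    finally show ?case .
  qed
qed

lemma Liminf_scaled_emeasure_section_F_set_ge:
  assumes eta: "\<eta> > 1" and p: "p > 0" and x: "x \<in> space M"
    and lim: "((\<lambda>t. Tf t x) \<longlongrightarrow> g) (at_right 0)"
    and sets: "\<And>c. Pair x -` F_set M p \<eta> Tf c \<in> sets (v_eta \<eta>)"
  shows "ennreal (\<bar>g\<bar> powr p / (\<eta>-1))
           \<le> Liminf at_top (\<lambda>c. ennreal (c powr p) * emeasure (v_eta \<eta>) (Pair x -` F_set M p \<eta> Tf c))"
  unfolding le_Liminf_iff
proof (intro allI impI)
  fix y assume y: "y < ennreal (\<bar>g\<bar> powr p / (\<eta>-1))"
  then have g: "\<bar>g\<bar> > 0" by (cases "g = 0") auto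
  have "((\<lambda>A. A powr p / (\<eta>-1)) \<longlongrightarrow> \<bar>g\<bar> powr p / (\<eta>-1)) (at_left \<bar>g\<bar>)"
    using g eta by (intro tendsto_intros) auto
  then have "((\<lambda>A. ennreal (A powr p / (\<eta>-1))) \<longlongrightarrow> ennreal (\<bar>g\<bar> powr p / (\<eta>-1))) (at_left \<bar>g\<bar>)"
    by (rule tendsto_ennrealI)
  then have "eventually (\<lambda>A. y < ennreal (A powr p / (\<eta>-1)) \<and> A \<in> {0<..<\<bar>g\<bar>}) (at_left \<bar>g\<bar>)"
    using y g by (intro eventually_conj order_tendstoD(1) eventually_at_left_real)
  then obtain A where A: "y < ennreal (A powr p / (\<eta>-1))" "0 < A" "A < \<bar>g\<bar>"
    using eventually_happens'[OF trivial_limit_at_left_real] by auto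
  have "eventually (\<lambda>t. A < \<bar>Tf t x\<bar>) (at_right 0)"
    using tendsto_rabs[OF lim] A(3) by (rule order_tendstoD)
  from eventually_scaled_emeasure_section_F_set_ge[OF eta p A(2) x this sets]
  show "eventually (\<lambda>c. y < ennreal (c powr p) * emeasure (v_eta \<eta>) (Pair x -` F_set M p \<eta> Tf c)) at_top"
    by eventually_elim (use A(1) in auto)
qed

lemma scaled_emeasure_section_F_set_le_enn_powr:
  assumes eta: "\<eta> > 1" and p: "p > 0" and c: "c > 0"
    and bound: "\<And>t. 0 < t \<Longrightarrow> t < 1/2 \<Longrightarrow> ennreal \<bar>Tf t x\<bar> \<le> S"
  shows "ennreal (c powr p) * emeasure (v_eta \<eta>) (Pair x -` F_set M p \<eta> Tf c)
           \<le> ennreal (1/(\<eta>-1)) * enn_powr S p"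
proof (cases "S = \<infinity>")
  case True
  then show ?thesis using eta by (simp add: enn_powr_def ennreal_mult_top)
next
  case False
  then obtain A where S: "S = ennreal A" and A: "A \<ge> 0" by (cases S) auto
  have "ennreal (c powr p) * emeasure (v_eta \<eta>) (Pair x -` F_set M p \<eta> Tf c) \<le> ennreal (A powr p / (\<eta>-1))"
    using bound A unfolding S by (intro scaled_emeasure_section_F_set_le[OF eta p c]) auto
  also have "\<dots> = ennreal (1/(\<eta>-1)) * enn_powr S p"
    using eta A by (simp add: S enn_powr_def ennreal_mult[symmetric])
  finally show ?thesis .
qed

theorem F_set_weak_type_bound:
  assumes eta: "\<eta> > 1" and p: "p > 0"
    and meas: "(\<lambda>(x, t). Tf t x) \<in> borel_measurable (M \<Otimes>\<^sub>M restrict_space lborel {0<..})"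
    and S: "S \<in> borel_measurable M"
    and bound: "\<And>x t. x \<in> space M \<Longrightarrow> 0 < t \<Longrightarrow> t < 1/2 \<Longrightarrow> ennreal \<bar>Tf t x\<bar> \<le> S x"
  shows "(SUP c\<in>{0<..}. ennreal (c powr p) * emeasure (M \<Otimes>\<^sub>M v_eta \<eta>) (F_set M p \<eta> Tf c))
           \<le> ennreal (1/(\<eta>-1)) * (\<integral>\<^sup>+ x. enn_powr (S x) p \<partial>M)"
proof (rule SUP_least)
  fix c :: real assume "c \<in> {0<..}"
  then have c: "c > 0" by simp
  have "ennreal (c powr p) * emeasure (M \<Otimes>\<^sub>M v_eta \<eta>) (F_set M p \<eta> Tf c)
      = (\<integral>\<^sup>+ x. ennreal (c powr p) * emeasure (v_eta \<eta>) (Pair x -` F_set M p \<eta> Tf c) \<partial>M)"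
    using emeasure_F_set[OF eta meas] by (simp add: nn_integral_cmult)
  also have "\<dots> \<le> (\<integral>\<^sup>+ x. ennreal (1/(\<eta>-1)) * enn_powr (S x) p \<partial>M)"
    using bound by (intro nn_integral_mono scaled_emeasure_section_F_set_le_enn_powr[OF eta p c])
  also have "\<dots> = ennreal (1/(\<eta>-1)) * (\<integral>\<^sup>+ x. enn_powr (S x) p \<partial>M)"
    using S by (intro nn_integral_cmult) (simp add: enn_powr_def)
  finally show "ennreal (c powr p) * emeasure (M \<Otimes>\<^sub>M v_eta \<eta>) (F_set M p \<eta> Tf c)
      \<le> ennreal (1/(\<eta>-1)) * (\<integral>\<^sup>+ x. enn_powr (S x) p \<partial>M)" .
qed

theorem F_set_Liminf_lower_bound:
  assumes eta: "\<eta> > 1" and p: "p > 0"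
    and meas: "(\<lambda>(x, t). Tf t x) \<in> borel_measurable (M \<Otimes>\<^sub>M restrict_space lborel {0<..})"
    and lim: "AE x in M. ((\<lambda>t. Tf t x) \<longlongrightarrow> g x) (at_right 0)"
  shows "ennreal (1/(\<eta>-1)) * Lp_pow M p g
           \<le> Liminf at_top (\<lambda>c. ennreal (c powr p) * emeasure (M \<Otimes>\<^sub>M v_eta \<eta>) (F_set M p \<eta> Tf c))"
proof -
  have "(\<lambda>x. Tf t x) \<in> borel_measurable M" if "t > 0" for t
  proof -
    have "(\<lambda>x. (x, t)) \<in> measurable M (M \<Otimes>\<^sub>M restrict_space lborel {0<..})"
      using that by (intro measurable_Pair measurable_ident_sets measurable_const) (auto simp: space_restrict_space)
    from measurable_compose[OF this meas] show ?thesis by simp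
  qed
  from AE_tendsto_at_right_0_measurable_version[OF this lim]
  obtain g' where g': "g' \<in> borel_measurable M" "AE x in M. g' x = g x" by blast
  define u where "u c x = ennreal (c powr p) * emeasure (v_eta \<eta>) (Pair x -` F_set M p \<eta> Tf c)" for c x
  have sets: "Pair x -` F_set M p \<eta> Tf c \<in> sets (v_eta \<eta>)" for x c
    using F_set_in_sets[OF meas] by (rule sets_Pair1)
  have "Lp_pow M p g = (\<integral>\<^sup>+ x. ennreal (\<bar>g' x\<bar> powr p) \<partial>M)"
    unfolding Lp_pow_def using g'(2) by (intro nn_integral_cong_AE) auto
  then have "ennreal (1/(\<eta>-1)) * Lp_pow M p g = (\<integral>\<^sup>+ x. ennreal (\<bar>g' x\<bar> powr p / (\<eta>-1)) \<partial>M)"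
    using g'(1) eta by (simp add: nn_integral_cmult[symmetric] ennreal_mult[symmetric])
  also have "\<dots> \<le> (\<integral>\<^sup>+ x. Liminf at_top (\<lambda>c. u c x) \<partial>M)"
    using lim g'(2) AE_space
    by (intro nn_integral_mono_AE, eventually_elim)
       (auto simp: u_def intro: Liminf_scaled_emeasure_section_F_set_ge[OF eta p _ _ sets])
  also have "\<dots> \<le> Liminf at_top (\<lambda>c. \<integral>\<^sup>+ x. u c x \<partial>M)"
    using emeasure_F_set(2)[OF eta meas] by (intro nn_integral_Liminf_at_top_le) (simp add: u_def)
  also have "(\<lambda>c. \<integral>\<^sup>+ x. u c x \<partial>M) = (\<lambda>c. ennreal (c powr p) * emeasure (M \<Otimes>\<^sub>M v_eta \<eta>) (F_set M p \<eta> Tf c))"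
    using emeasure_F_set[OF eta meas] by (simp add: u_def nn_integral_cmult)
  finally show ?thesis .
qed

theorem mainTheorem3:
  fixes M :: "'a measure" and p \<eta> :: real
    and T :: "real \<Rightarrow> ('a \<Rightarrow> real) \<Rightarrow> 'a \<Rightarrow> real" and f :: "'a \<Rightarrow> real"
  assumes "sigma_finite_measure M"
    and "1 \<le> p" and "\<eta> > 1"
    and "\<And>t h. t > 0 \<Longrightarrow> memLp M p h \<Longrightarrow> memLp M p (T t h)"
    and "memLp M p f"
    and "(\<lambda>(x, t). T t f x) \<in> borel_measurable (M \<Otimes>\<^sub>M restrict_space lborel {0<..})"
  shows
    "((Tstar T f \<in> borel_measurable M \<and> (\<integral>\<^sup>+ x. enn_powr (Tstar T f x) p \<partial>M) < \<infinity>) \<longrightarrow>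
       (SUP c\<in>{0<..}. ennreal (c powr p) * emeasure (M \<Otimes>\<^sub>M v_eta \<eta>) (F_set M p \<eta> (\<lambda>t. T t f) c))
         \<le> ennreal (1 / (\<eta> - 1)) * (\<integral>\<^sup>+ x. enn_powr (Tstar T f x) p \<partial>M))
   \<and> (\<forall>C::real. (p > 1 \<and> C \<ge> 0 \<and>
        (\<forall>h. memLp M p h \<longrightarrow> Tstar T h \<in> borel_measurable M \<and>
             (\<integral>\<^sup>+ x. enn_powr (Tstar T h x) p \<partial>M) \<le> ennreal (C powr p) * Lp_pow M p h)) \<longrightarrow>
       (SUP c\<in>{0<..}. ennreal (c powr p) * emeasure (M \<Otimes>\<^sub>M v_eta \<eta>) (F_set M p \<eta> (\<lambda>t. T t f) c))
         \<le> ennreal (C powr p / (\<eta> - 1)) * Lp_pow M p f)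
   \<and> (\<forall>g::'a \<Rightarrow> real. (AE x in M. ((\<lambda>t. T t f x) \<longlongrightarrow> g x) (at_right 0)) \<longrightarrow>
       ennreal (1 / (\<eta> - 1)) * Lp_pow M p g
         \<le> Liminf at_top (\<lambda>c::real. ennreal (c powr p) * emeasure (M \<Otimes>\<^sub>M v_eta \<eta>) (F_set M p \<eta> (\<lambda>t. T t f) c)))"
proof -
  have p: "p > 0" using assms(2) by simp
  let ?F = "\<lambda>c. ennreal (c powr p) * emeasure (M \<Otimes>\<^sub>M v_eta \<eta>) (F_set M p \<eta> (\<lambda>t. T t f) c)"
  let ?I = "\<integral>\<^sup>+ x. enn_powr (Tstar T f x) p \<partial>M"
  have Tstar_bound: "ennreal \<bar>T t f x\<bar> \<le> Tstar T f x" if "t > 0" for t x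
    unfolding Tstar_def using that by (auto intro: SUP_upper)
  have weak_type: "(SUP c\<in>{0<..}. ?F c) \<le> ennreal (1 / (\<eta> - 1)) * ?I" if "Tstar T f \<in> borel_measurable M"
    using that Tstar_bound by (intro F_set_weak_type_bound[OF assms(3) p assms(6)]) auto
  show ?thesis
  proof (intro conjI allI impI)
    assume "Tstar T f \<in> borel_measurable M \<and> ?I < \<infinity>"
    then show "(SUP c\<in>{0<..}. ?F c) \<le> ennreal (1 / (\<eta> - 1)) * ?I"
      by (intro weak_type) simp
  next
    fix C :: real
    assume "p > 1 \<and> C \<ge> 0 \<and> (\<forall>h. memLp M p h \<longrightarrow> Tstar T h \<in> borel_measurable M \<and>
      (\<integral>\<^sup>+ x. enn_powr (Tstar T h x) p \<partial>M) \<le> ennreal (C powr p) * Lp_pow M p h)"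
    then have measurable: "Tstar T f \<in> borel_measurable M"
      and maximal: "?I \<le> ennreal (C powr p) * Lp_pow M p f"
      using assms(5) by auto
    have "(SUP c\<in>{0<..}. ?F c) \<le> ennreal (1 / (\<eta> - 1)) * ?I"
      using measurable by (rule weak_type)
    also have "\<dots> \<le> ennreal (1 / (\<eta> - 1)) * (ennreal (C powr p) * Lp_pow M p f)"
      using maximal by (rule mult_left_mono) simp
    also have "\<dots> = ennreal (C powr p / (\<eta> - 1)) * Lp_pow M p f"
      using assms(3) by (simp add: mult.assoc[symmetric] ennreal_mult[symmetric])
    finally show "(SUP c\<in>{0<..}. ?F c) \<le> ennreal (C powr p / (\<eta> - 1)) * Lp_pow M p f" .
  next
    fix g :: "'a \<Rightarrow> real"
    assume "AE x in M. ((\<lambda>t. T t f x) \<longlongrightarrow> g x) (at_right 0)"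
    then show "ennreal (1 / (\<eta> - 1)) * Lp_pow M p g \<le> Liminf at_top ?F"
      by (rule F_set_Liminf_lower_bound[OF assms(3) p assms(6)])
  qed
qed

end
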